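(* $\mathfrak{L}(\mathbb{Z}^2) \subsetneq \mathfrak{L}(\mathbf{H})$.
   Context: For a group $G$ with identity $e$, a $G$-automaton is a tuple $(Q,\Sigma,G,\delta,q_0,Q_a)$ where $Q$ is a finite set of states, $\Sigma$ a finite input alphabet, $q_0\in Q$ the initial state, $Q_a\subseteq Q$ the accepting states, and $\delta$ assigns to each $(q,\sigma)\in Q\times(\Sigma\cup\{\varepsilon\})$ a finite set of pairs $(q',m)\in Q\times G$. The register holds an element of $G$, initially $e$; using a transition $(q',m)\in\delta(q,\sigma)$ the automaton reads $\sigma$ (or nothing), moves to $q'$ and replaces the register content $x$ by $xm$. A word is accepted if some computation reads it entirely and ends in an accepting state with register equal to $e$. $\mathfrak{L}(G)$ is the class of languages recognized by $G$-automata. $\mathbb{Z}^2$ is the free Abelian group of rank 2. $\mathbf{H}$ is the discrete Heisenberg group $\langle a,b\mid ab=bac,\ ac=ca,\ bc=cb\rangle$ with $c=a^{-1}b^{-1}ab$, equivalently the group of $3\times3$ upper unitriangular integer matrices. *)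

theory Defs
  imports "HOL-Algebra.Elementary_Groups"
begin

text \<open>States and input letters are taken from nat (any finite
  sets of states / letters can be renamed into nat).  The transition function
  delta : Q x (Sigma + {eps}) -> finite subsets of Q x G is given as a finite
  relation: (q, Some s, q', m) means (q', m) in delta(q, s), and
  (q, None, q', m) means (q', m) in delta(q, eps).\<close>

record 'g gaut =
  states :: "nat set"
  alph   :: "nat set"
  init   :: nat
  accs   :: "nat set"
  trans  :: "(nat \<times> nat option \<times> nat \<times> 'g) set"

definition wf_gaut :: "('g, 'm) monoid_scheme \<Rightarrow> 'g gaut \<Rightarrow> bool" where
  "wf_gaut G A \<longleftrightarrow> finite (states A) \<and> finite (alph A) \<and> init A \<in> states A \<and>
     accs A \<subseteq> states A \<and> finite (trans A) \<and>
     trans A \<subseteq> states A \<times> (insert None (Some ` alph A)) \<times> states A \<times> carrier G"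

inductive reach :: "('g, 'm) monoid_scheme \<Rightarrow> 'g gaut \<Rightarrow> nat \<Rightarrow> nat list \<Rightarrow> 'g \<Rightarrow> bool"
  for G A where
  start: "reach G A (init A) [] \<one>\<^bsub>G\<^esub>"
| eps:  "reach G A q w x \<Longrightarrow> (q, None, q', m) \<in> trans A \<Longrightarrow> reach G A q' w (x \<otimes>\<^bsub>G\<^esub> m)"
| read: "reach G A q w x \<Longrightarrow> (q, Some s, q', m) \<in> trans A \<Longrightarrow> reach G A q' (w @ [s]) (x \<otimes>\<^bsub>G\<^esub> m)"

definition gaut_lang :: "('g, 'm) monoid_scheme \<Rightarrow> 'g gaut \<Rightarrow> nat list set" where
  "gaut_lang G A = {w. \<exists>q \<in> accs A. reach G A q w \<one>\<^bsub>G\<^esub>}"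

definition LClass :: "('g, 'm) monoid_scheme \<Rightarrow> nat list set set" where
  "LClass G = {gaut_lang G A | A. wf_gaut G A}"

definition Z2 :: "(int \<times> int) monoid" where
  "Z2 = integer_group \<times>\<times> integer_group"

text \<open>Discrete Heisenberg group: upper unitriangular integer matrices
  [[1,a,c],[0,1,b],[0,0,1]] encoded as (a,b,c); matrix multiplication gives
  (a,b,c)(a',b',c') = (a+a', b+b', c+c'+a*b').\<close>
definition Heis :: "(int \<times> int \<times> int) monoid" where
  "Heis = \<lparr>carrier = UNIV,
           monoid.mult = (\<lambda>(a, b, c) (a', b', c'). (a + a', b + b', c + c' + a * b')),
           one = (0, 0, 0)\<rparr>"

end

theory Submission
  imports Defs Complex_Main "HOL-Library.Multiset"
begin

text \<open>
  The inclusion \<open>L(\<int>\<^sup>2) \<subseteq> L(H)\<close> comes from the injective homomorphism \<open>(x, y) \<mapsto> (0, x, y)\<close>: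
  relabelling the transitions of a \<open>\<int>\<^sup>2\<close>-automaton along it gives an \<open>H\<close>-automaton with the same
  language.

  For strictness, consider the unary words whose length is a triangular number \<open>n(n+1)/2\<close>.
  An \<open>H\<close>-automaton accepts them: looping \<open>k\<close> times on \<open>(1, 1, 0)\<close> yields the register
  \<open>(k, k, k(k-1)/2)\<close>, whose central entry is then counted down by reading letters, after which the
  two outer entries are cancelled without touching the centre.

  No automaton over a commutative monoid accepts them. There the register content of a run depends
  only on the multiset of its transitions. Every accepting run splits into a short path plus short
  cycles, and Dickson's lemma yields accepting runs of lengths \<open>l < l'\<close> such that the second
  consists of the first plus extra cycles which all occur in the first. These extra cycles have
  product \<open>1\<close> and can be inserted any number of times, so every length \<open>l + k(l' - l)\<close> is
  accepted; but the triangular numbers contain no infinite arithmetic progression.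
\<close>

section \<open>Runs as walks\<close>

type_synonym 'g transition = "nat \<times> nat option \<times> nat \<times> 'g"

fun tr_src :: "'g transition \<Rightarrow> nat" where "tr_src (q, _, _, _) = q"

fun tr_lbl :: "'g transition \<Rightarrow> nat option" where "tr_lbl (_, l, _, _) = l"

fun tr_tgt :: "'g transition \<Rightarrow> nat" where "tr_tgt (_, _, q', _) = q'"

fun tr_elem :: "'g transition \<Rightarrow> 'g" where "tr_elem (_, _, _, m) = m"

fun walk :: "'g transition set \<Rightarrow> nat \<Rightarrow> 'g transition list \<Rightarrow> nat \<Rightarrow> bool" where
  "walk T q [] q' \<longleftrightarrow> q = q'"
| "walk T q (t # ts) q' \<longleftrightarrow> t \<in> T \<and> tr_src t = q \<and> walk T (tr_tgt t) ts q'"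

definition walk_word :: "'g transition list \<Rightarrow> nat list" where
  "walk_word ts = List.map_filter tr_lbl ts"

definition walk_prod :: "('g, 'm) monoid_scheme \<Rightarrow> 'g transition list \<Rightarrow> 'g" where
  "walk_prod G ts = foldl (\<otimes>\<^bsub>G\<^esub>) \<one>\<^bsub>G\<^esub> (map tr_elem ts)"

lemma walk_append: "walk T q (xs @ ys) q' \<longleftrightarrow> (\<exists>r. walk T q xs r \<and> walk T r ys q')"
  by (induction xs arbitrary: q) auto

lemma walk_snoc: "walk T q (ts @ [t]) q' \<longleftrightarrow> walk T q ts (tr_src t) \<and> t \<in> T \<and> tr_tgt t = q'"
  by (auto simp: walk_append)

lemma walk_subset: "walk T q ts q' \<Longrightarrow> set ts \<subseteq> T"
  by (induction ts arbitrary: q) auto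

lemma walk_word_append [simp]: "walk_word (xs @ ys) = walk_word xs @ walk_word ys"
  by (simp add: walk_word_def map_filter_def)

lemma walk_word_simps [simp]:
  "walk_word [] = []"
  "walk_word ((q, None, q', m) # ts) = walk_word ts"
  "walk_word ((q, Some s, q', m) # ts) = s # walk_word ts"
  by (simp_all add: walk_word_def)

lemma walk_prod_Nil [simp]: "walk_prod G [] = \<one>\<^bsub>G\<^esub>"
  by (simp add: walk_prod_def)

lemma walk_prod_snoc [simp]: "walk_prod G (ts @ [t]) = walk_prod G ts \<otimes>\<^bsub>G\<^esub> tr_elem t"
  by (simp add: walk_prod_def)

lemma reach_iff_walk:
  "reach G A q w x \<longleftrightarrow>
     (\<exists>ts. walk (trans A) (init A) ts q \<and> walk_word ts = w \<and> x = walk_prod G ts)"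
proof
  assume "reach G A q w x"
  then show "\<exists>ts. walk (trans A) (init A) ts q \<and> walk_word ts = w \<and> x = walk_prod G ts"
  proof induction
    case start
    show ?case by (intro exI[of _ "[]"]) simp
  next
    case (eps q w x q' m)
    then obtain ts where "walk (trans A) (init A) ts q" "walk_word ts = w" "x = walk_prod G ts"
      by blast
    with eps.hyps(2) show ?case by (intro exI[of _ "ts @ [(q, None, q', m)]"]) (simp add: walk_snoc)
  next
    case (read q w x s q' m)
    then obtain ts where "walk (trans A) (init A) ts q" "walk_word ts = w" "x = walk_prod G ts"
      by blast
    with read.hyps(2) show ?case by (intro exI[of _ "ts @ [(q, Some s, q', m)]"]) (simp add: walk_snoc)
  qed
next
  assume "\<exists>ts. walk (trans A) (init A) ts q \<and> walk_word ts = w \<and> x = walk_prod G ts"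
  then obtain ts where "walk (trans A) (init A) ts q" "walk_word ts = w" "x = walk_prod G ts"
    by blast
  then show "reach G A q w x"
  proof (induction ts arbitrary: q w x rule: rev_induct)
    case Nil
    then show ?case by (auto intro: reach.start)
  next
    case (snoc t ts)
    obtain p l m where t: "t = (p, l, q, m)" and "t \<in> trans A"
      and r: "reach G A p (walk_word ts) (walk_prod G ts)"
      using snoc by (cases t) (auto simp: walk_snoc)
    then show ?case
      using snoc.prems reach.eps[OF r] reach.read[OF r] by (cases l) auto
  qed
qed

lemma gaut_lang_iff_walk:
  "w \<in> gaut_lang G A \<longleftrightarrow>
     (\<exists>qf\<in>accs A. \<exists>ts. walk (trans A) (init A) ts qf \<and> walk_word ts = w \<and> walk_prod G ts = \<one>\<^bsub>G\<^esub>)"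
  unfolding gaut_lang_def reach_iff_walk by (auto simp: eq_commute[of "\<one>\<^bsub>G\<^esub>"])

lemma wf_gaut_trans:
  assumes "wf_gaut G A" "t \<in> trans A"
  shows "tr_tgt t \<in> states A" "tr_elem t \<in> carrier G"
  using assms unfolding wf_gaut_def by (cases t; force)+

lemma (in monoid) foldl_mult_closed:
  "x \<in> carrier G \<Longrightarrow> set ys \<subseteq> carrier G \<Longrightarrow> foldl (\<otimes>) x ys \<in> carrier G"
  by (induction ys arbitrary: x) auto

lemma (in monoid) foldl_mult:
  "x \<in> carrier G \<Longrightarrow> set ys \<subseteq> carrier G \<Longrightarrow> foldl (\<otimes>) x ys = x \<otimes> foldl (\<otimes>) \<one> ys"
proof (induction ys arbitrary: x)
  case (Cons y ys)
  have y: "y \<in> carrier G" "set ys \<subseteq> carrier G"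
    using Cons.prems by auto
  have "foldl (\<otimes>) x (y # ys) = (x \<otimes> y) \<otimes> foldl (\<otimes>) \<one> ys"
    by simp (rule Cons.IH; use Cons.prems y in simp)
  also have "\<dots> = x \<otimes> (y \<otimes> foldl (\<otimes>) \<one> ys)"
    using Cons.prems y by (simp add: m_assoc foldl_mult_closed)
  also have "y \<otimes> foldl (\<otimes>) \<one> ys = foldl (\<otimes>) \<one> (y # ys)"
    using y(1) by simp (rule Cons.IH[symmetric]; use y in simp)
  finally show ?case .
qed simp

lemma (in monoid) foldl_mult_append:
  "set xs \<subseteq> carrier G \<Longrightarrow> set ys \<subseteq> carrier G \<Longrightarrow>
     foldl (\<otimes>) \<one> (xs @ ys) = foldl (\<otimes>) \<one> xs \<otimes> foldl (\<otimes>) \<one> ys"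
  unfolding foldl_append by (rule foldl_mult) (simp_all add: foldl_mult_closed)

lemma (in monoid) foldl_mult_Cons:
  "x \<in> carrier G \<Longrightarrow> set ys \<subseteq> carrier G \<Longrightarrow> foldl (\<otimes>) \<one> (x # ys) = x \<otimes> foldl (\<otimes>) \<one> ys"
  using foldl_mult[of x ys] by simp

lemma (in comm_monoid) foldl_mult_mset_cong:
  assumes "mset xs = mset ys" "set xs \<subseteq> carrier G"
  shows "foldl (\<otimes>) \<one> xs = foldl (\<otimes>) \<one> ys"
  using assms
proof (induction xs arbitrary: ys)
  case (Cons x xs)
  then have "x \<in> set ys" by (metis list.set_intros(1) set_mset_mset)
  then obtain ys1 ys2 where ys: "ys = ys1 @ x # ys2" by (meson split_list)
  have "set ys \<subseteq> carrier G"
    using Cons.prems by (metis mset_eq_setD)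
  then have carr: "x \<in> carrier G" "set ys1 \<subseteq> carrier G" "set ys2 \<subseteq> carrier G"
    by (auto simp: ys)
  have "foldl (\<otimes>) \<one> ys = foldl (\<otimes>) \<one> ys1 \<otimes> (x \<otimes> foldl (\<otimes>) \<one> ys2)"
    unfolding ys using carr
    by (simp add: foldl_mult_append foldl_mult_Cons del: foldl_append foldl_Cons)
  also have "\<dots> = x \<otimes> foldl (\<otimes>) \<one> (ys1 @ ys2)"
    using carr by (simp add: foldl_mult_append foldl_mult_closed m_lcomm del: foldl_append)
  also have "foldl (\<otimes>) \<one> (ys1 @ ys2) = foldl (\<otimes>) \<one> xs"
    using Cons.IH[of "ys1 @ ys2"] Cons.prems by (simp add: ys)
  also have "x \<otimes> foldl (\<otimes>) \<one> xs = foldl (\<otimes>) \<one> (x # xs)"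
    using carr Cons.prems by (simp add: foldl_mult_Cons del: foldl_Cons)
  finally show ?case by simp
qed simp

lemma walk_prod_closed:
  "monoid G \<Longrightarrow> tr_elem ` set ts \<subseteq> carrier G \<Longrightarrow> walk_prod G ts \<in> carrier G"
  unfolding walk_prod_def by (simp add: monoid.foldl_mult_closed)

lemma walk_prod_append:
  assumes "monoid G" "tr_elem ` set xs \<subseteq> carrier G" "tr_elem ` set ys \<subseteq> carrier G"
  shows "walk_prod G (xs @ ys) = walk_prod G xs \<otimes>\<^bsub>G\<^esub> walk_prod G ys"
  using assms monoid.foldl_mult_append[OF assms(1), of "map tr_elem xs" "map tr_elem ys"]
  by (simp add: walk_prod_def)

lemma walk_prod_mset_cong:
  assumes "comm_monoid G" "tr_elem ` set xs \<subseteq> carrier G" "mset xs = mset ys"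
  shows "walk_prod G xs = walk_prod G ys"
  using assms comm_monoid.foldl_mult_mset_cong[OF assms(1), of "map tr_elem xs" "map tr_elem ys"]
  by (simp add: walk_prod_def)

lemma walk_prod_concat_replicate:
  assumes "monoid G" "tr_elem ` set e \<subseteq> carrier G" "walk_prod G e = \<one>\<^bsub>G\<^esub>"
  shows "walk_prod G (concat (replicate k e)) = \<one>\<^bsub>G\<^esub>"
proof (induction k)
  case (Suc k)
  have "tr_elem ` set (concat (replicate k e)) \<subseteq> carrier G"
    using assms(2) by (induction k) auto
  then show ?case
    using Suc assms by (simp add: walk_prod_append)
qed simp

lemma replicate_mset_add: "replicate_mset (m + n) a = replicate_mset m a + replicate_mset n a"
  by (metis mset_append mset_replicate replicate_add)

lemma mset_eq_replicate_msetD: "mset xs = replicate_mset n a \<Longrightarrow> xs = replicate n a"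
  by (metis mset_replicate mset_eq_setD mset_eq_length length_replicate replicate_eqI in_set_replicate)

lemma mset_concat_cong: "mset xss = mset yss \<Longrightarrow> mset (concat xss) = mset (concat yss)"
  by (metis mset_concat sum_mset_sum_list mset_map)

lemma mset_walk_word_cong: "mset xs = mset ys \<Longrightarrow> mset (walk_word xs) = mset (walk_word ys)"
  by (simp add: walk_word_def map_filter_def)

lemma walk_word_concat_replicate:
  "walk_word e = replicate d a \<Longrightarrow> walk_word (concat (replicate k e)) = replicate (k * d) a"
  by (induction k) (simp_all add: replicate_add)

section \<open>Cycle decomposition\<close>

lemma walk_split_at_visit:
  assumes "walk T q ts q'" "p \<in> tr_tgt ` set ts"
  obtains a b where "ts = a @ b" "a \<noteq> []" "walk T q a p" "walk T p b q'"
  using assms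
proof (induction ts arbitrary: q thesis)
  case (Cons t ts)
  show ?case
  proof (cases "tr_tgt t = p")
    case True
    then show ?thesis using Cons.prems by (intro Cons.prems(1)[of "[t]" ts]) auto
  next
    case False
    then obtain a b where "ts = a @ b" "a \<noteq> []" "walk T (tr_tgt t) a p" "walk T p b q'"
      using Cons.IH Cons.prems(2,3) by auto
    then show ?thesis using Cons.prems by (intro Cons.prems(1)[of "t # a" b]) auto
  qed
qed simp

lemma walk_has_cycle:
  assumes "walk T q ts q'" "finite S" "q \<in> S" "tr_tgt ` set ts \<subseteq> S" "card S \<le> length ts"
  obtains a c b p where "ts = a @ c @ b" "c \<noteq> []" "walk T q a p" "walk T p c p" "walk T p b q'"
  using assms
proof (induction ts arbitrary: q S thesis)
  case Nil
  then show ?case by simp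
next
  case (Cons t ts)
  show ?case
  proof (cases "q \<in> tr_tgt ` set (t # ts)")
    case True
    then show ?thesis
      using walk_split_at_visit[OF Cons.prems(2)] Cons.prems(1)[of "[]"] by (metis append_Nil walk.simps(1))
  next
    case False
    have "walk T (tr_tgt t) ts q'" "card (S - {q}) \<le> length ts"
      using Cons.prems by auto
    moreover have "tr_tgt t \<in> S - {q}" "tr_tgt ` set ts \<subseteq> S - {q}"
      using Cons.prems(5) False by auto
    ultimately obtain a c b p where "ts = a @ c @ b" "c \<noteq> []" "walk T (tr_tgt t) a p"
      "walk T p c p" "walk T p b q'"
      using Cons.IH Cons.prems(3) by (metis finite_Diff)
    then show ?thesis
      using Cons.prems by (intro Cons.prems(1)[of "t # a" c b p]) auto
  qed
qed

lemma walk_has_short_cycle: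
  assumes "walk T q ts q'" "finite S" "q \<in> S" "\<forall>t\<in>T. tr_tgt t \<in> S" "card S < length ts"
  obtains a c b p where "ts = a @ c @ b" "c \<noteq> []" "length c \<le> card S"
    "walk T q a p" "walk T p c p" "walk T p b q'"
proof -
  let ?n = "card S"
  obtain r where w1: "walk T q (take ?n ts) r" and w2: "walk T r (drop ?n ts) q'"
    using assms(1) walk_append by (metis append_take_drop_id)
  have "tr_tgt ` set (take ?n ts) \<subseteq> S"
    using walk_subset[OF w1] assms(4) by auto
  then obtain a c b p where d: "take ?n ts = a @ c @ b" "c \<noteq> []" "walk T q a p"
    "walk T p c p" "walk T p b r"
    by (rule walk_has_cycle[OF w1 assms(2,3)]) (use assms(5) in auto)
  have "length c \<le> ?n"
    using arg_cong[OF d(1), of length] by simp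
  moreover have "ts = a @ c @ (b @ drop ?n ts)"
    using d(1) by (metis append_assoc append_take_drop_id)
  moreover have "walk T p (b @ drop ?n ts) q'"
    using d(5) w2 walk_append by metis
  ultimately show ?thesis using d that by blast
qed

lemma walk_cycle_decomposition:
  assumes "walk T q ts q'" "finite S" "q \<in> S" "\<forall>t\<in>T. tr_tgt t \<in> S"
  obtains \<sigma> cs where "walk T q \<sigma> q'" "length \<sigma> \<le> card S"
    "\<forall>c\<in>set cs. length c \<le> card S \<and> (\<exists>p. walk T p c p)"
    "mset ts = mset (\<sigma> @ concat cs)"
  using assms(1)
proof (induction "length ts" arbitrary: ts thesis rule: less_induct)
  case less
  show ?case
  proof (cases "length ts \<le> card S")
    case True
    then show ?thesis using less.prems by (intro less.prems(1)[of ts "[]"]) auto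
  next
    case False
    obtain a c b p where d: "ts = a @ c @ b" "c \<noteq> []" "length c \<le> card S"
      "walk T q a p" "walk T p c p" "walk T p b q'"
      by (rule walk_has_short_cycle[OF less.prems(2) assms(2,3,4)]) (use False in auto)
    have "walk T q (a @ b) q'" "length (a @ b) < length ts"
      using d unfolding walk_append by auto
    then obtain \<sigma> cs where "walk T q \<sigma> q'" "length \<sigma> \<le> card S"
      "\<forall>c\<in>set cs. length c \<le> card S \<and> (\<exists>p. walk T p c p)" "mset (a @ b) = mset (\<sigma> @ concat cs)"
      using less.hyps by blast
    then show ?thesis
      using d by (intro less.prems(1)[of \<sigma> "c # cs"]) (auto simp: add_ac)
  qed
qed

lemma walk_insert_cycle:
  assumes "walk T q ts q'" "walk T p c p" "set c \<subseteq> set ts"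
  obtains ts' where "walk T q ts' q'" "mset ts' = mset (ts @ c)" "set ts' = set ts"
proof (cases c)
  case Nil
  then show ?thesis using assms(1) that by simp
next
  case (Cons t c')
  then have "tr_src t = p" "t \<in> set ts" using assms(2,3) by auto
  then obtain a b where ab: "ts = a @ t # b" by (meson split_list)
  then obtain r where "walk T q a r" "walk T r (t # b) q'"
    using assms(1) walk_append by metis
  then have "walk T q (a @ c @ t # b) q'"
    using assms(2) \<open>tr_src t = p\<close> unfolding walk_append by auto
  then show ?thesis
    using ab assms(3) by (intro that) auto
qed

lemma walk_insert_cycles:
  assumes "walk T q ts q'" "\<forall>c\<in>set cs. (\<exists>p. walk T p c p) \<and> set c \<subseteq> set ts"
  obtains ts' where "walk T q ts' q'" "mset ts' = mset (ts @ concat cs)" "set ts' = set ts"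
  using assms(2)
proof (induction cs arbitrary: thesis rule: rev_induct)
  case Nil
  then show ?case using assms(1) by simp
next
  case (snoc c cs)
  then obtain ts' where ts': "walk T q ts' q'" "mset ts' = mset (ts @ concat cs)" "set ts' = set ts"
    by auto
  moreover obtain p where "walk T p c p" "set c \<subseteq> set ts'"
    using snoc.prems(2) ts'(3) by auto
  ultimately obtain ts'' where "walk T q ts'' q'" "mset ts'' = mset (ts' @ c)" "set ts'' = set ts'"
    using walk_insert_cycle by metis
  then show ?case using ts' by (intro snoc.prems(1)[of ts'']) auto
qed

section \<open>Dickson's lemma\<close>

lemma nat_seq_mono_subseq:
  fixes s :: "nat \<Rightarrow> nat"
  obtains r :: "nat \<Rightarrow> nat" where "strict_mono r" "mono (s \<circ> r)"
proof -
  obtain r where r: "strict_mono r" "monoseq (\<lambda>n. s (r n))"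
    using seq_monosub by blast
  show ?thesis
  proof (cases "\<forall>m n. m \<le> n \<longrightarrow> s (r m) \<le> s (r n)")
    case True
    then have "mono (s \<circ> r)"
      by (intro monoI) simp
    with r(1) show ?thesis by (rule that)
  next
    case False
    then have dec: "s (r n) \<le> s (r m)" if "m \<le> n" for m n
      using r(2) that unfolding monoseq_def by blast
    obtain N where N: "\<forall>n. s (r N) \<le> s (r n)"
      using ex_has_least_nat[of "\<lambda>_. True" 0 "\<lambda>n. s (r n)"] by blast
    have "strict_mono (\<lambda>n. r (n + N))"
      using r(1) by (simp add: strict_mono_def)
    moreover have "s (r (n + N)) = s (r N)" for n
      using dec[of N "n + N"] N by (simp add: order_antisym)
    then have "mono (s \<circ> (\<lambda>n. r (n + N)))"
      by (intro monoI) simp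
    ultimately show ?thesis by (rule that)
  qed
qed

lemma finite_coords_mono_subseq:
  fixes f :: "nat \<Rightarrow> 'c \<Rightarrow> nat"
  assumes "finite C"
  shows "\<exists>r :: nat \<Rightarrow> nat. strict_mono r \<and> (\<forall>c\<in>C. mono (\<lambda>n. f (r n) c))"
  using assms
proof (induction C rule: finite_induct)
  case empty
  show ?case by (intro exI[of _ id]) (simp add: strict_mono_def)
next
  case (insert x C)
  then obtain r :: "nat \<Rightarrow> nat" where r: "strict_mono r" "\<forall>c\<in>C. mono (\<lambda>n. f (r n) c)"
    by blast
  obtain r' :: "nat \<Rightarrow> nat" where r': "strict_mono r'" "mono ((\<lambda>n. f (r n) x) \<circ> r')"
    by (rule nat_seq_mono_subseq[of "\<lambda>n. f (r n) x"])
  have "mono (\<lambda>n. f (r (r' n)) c)" if "c \<in> insert x C" for c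
  proof (rule monoI)
    fix m n :: nat
    assume "m \<le> n"
    show "f (r (r' m)) c \<le> f (r (r' n)) c"
    proof (cases "c = x")
      case True
      then show ?thesis using monoD[OF r'(2) \<open>m \<le> n\<close>] by simp
    next
      case False
      then have "mono (\<lambda>n. f (r n) c)" using r(2) that by simp
      moreover have "r' m \<le> r' n"
        using strict_mono_less_eq[OF r'(1)] \<open>m \<le> n\<close> by blast
      ultimately show ?thesis by (rule monoD)
    qed
  qed
  then show ?case
    using strict_mono_o[OF r(1) r'(1)] by (intro exI[of _ "r \<circ> r'"]) (simp add: o_def)
qed

lemma multiset_seq_subset_pair:
  fixes M :: "nat \<Rightarrow> 'a multiset" and g :: "nat \<Rightarrow> 'b"
  assumes "finite X" "\<And>i. set_mset (M i) \<subseteq> X" "finite (range g)"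
  obtains i j where "i < j" "g i = g j" "set_mset (M i) = set_mset (M j)" "M i \<subseteq># M j"
proof -
  define col where "col i = (g i, set_mset (M i))" for i
  have "range col \<subseteq> range g \<times> Pow X"
    using assms(2) by (auto simp: col_def)
  then have "finite (range col)"
    using assms(1,3) by (meson finite_Pow_iff finite_SigmaI finite_subset)
  then obtain i0 where Y: "infinite {i. col i = col i0}"
    using pigeonhole_infinite[of "UNIV :: nat set" col] by auto
  define e where "e = enumerate {i. col i = col i0}"
  obtain r :: "nat \<Rightarrow> nat" where r: "strict_mono r" "\<forall>c\<in>X. mono (\<lambda>n. count (M (e (r n))) c)"
    using finite_coords_mono_subseq[OF assms(1), of "\<lambda>n. count (M (e n))"] by blast
  let ?i = "e (r 0)" and ?j = "e (r 1)"
  have "?i < ?j"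
    using r(1) strict_mono_enumerate[OF Y] by (simp add: e_def strict_mono_def)
  moreover have "col ?i = col ?j"
    using enumerate_in_set[OF Y] by (simp add: e_def)
  moreover have "M ?i \<subseteq># M ?j"
  proof (rule mset_subset_eqI)
    fix c
    show "count (M ?i) c \<le> count (M ?j) c"
    proof (cases "c \<in> X")
      case True
      then show ?thesis using r(2) by (auto simp: mono_def)
    next
      case False
      then show ?thesis using assms(2) by (metis count_eq_zero_iff subsetD zero_le)
    qed
  qed
  ultimately show ?thesis
    by (intro that[of ?i ?j]) (simp_all add: col_def)
qed

section \<open>Unary languages over commutative monoids\<close>

lemma accepted_words_decomposed_walks:
  assumes wf: "wf_gaut G A" and acc: "\<And>i. ws i \<in> gaut_lang G A"
  obtains QF TS SG CS where "\<And>i. QF i \<in> accs A" "\<And>i. walk (trans A) (init A) (TS i) (QF i)"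
    "\<And>i. walk_word (TS i) = ws i" "\<And>i. walk_prod G (TS i) = \<one>\<^bsub>G\<^esub>"
    "\<And>i. walk (trans A) (init A) (SG i) (QF i)" "\<And>i. length (SG i) \<le> card (states A)"
    "\<And>i. \<forall>c\<in>set (CS i). length c \<le> card (states A) \<and> (\<exists>p. walk (trans A) p c p)"
    "\<And>i. mset (TS i) = mset (SG i @ concat (CS i))"
proof -
  define run where "run i qf ts \<sigma> cs \<longleftrightarrow> qf \<in> accs A \<and> walk (trans A) (init A) ts qf \<and>
      walk_word ts = ws i \<and> walk_prod G ts = \<one>\<^bsub>G\<^esub> \<and>
      walk (trans A) (init A) \<sigma> qf \<and> length \<sigma> \<le> card (states A) \<and>
      (\<forall>c\<in>set cs. length c \<le> card (states A) \<and> (\<exists>p. walk (trans A) p c p)) \<and>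
      mset ts = mset (\<sigma> @ concat cs)"
    for i qf ts \<sigma> cs
  have states: "finite (states A)" "init A \<in> states A"
    using wf by (auto simp: wf_gaut_def)
  have "\<exists>qf ts \<sigma> cs. run i qf ts \<sigma> cs" for i
  proof -
    obtain qf ts where ts: "qf \<in> accs A" "walk (trans A) (init A) ts qf" "walk_word ts = ws i"
      "walk_prod G ts = \<one>\<^bsub>G\<^esub>"
      using acc[of i] gaut_lang_iff_walk by metis
    then show ?thesis
      using walk_cycle_decomposition[OF ts(2) states] wf_gaut_trans(1)[OF wf] unfolding run_def
      by metis
  qed
  then obtain QF TS SG CS where runs: "\<And>i. run i (QF i) (TS i) (SG i) (CS i)"
    by metis
  show ?thesis
    by (rule that[of QF TS SG CS]) (use runs in \<open>auto simp: run_def\<close>)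
qed

lemma mset_concat_diff:
  assumes "mset ts1 = mset (\<sigma> @ concat cs1)" "mset ts2 = mset (\<sigma> @ concat cs2)"
    and "mset cs1 \<subseteq># mset cs2"
  obtains ds where "mset ts2 = mset (ts1 @ concat ds)" "set ds \<subseteq> set cs2"
proof -
  obtain ds where ds: "mset ds = mset cs2 - mset cs1"
    using ex_mset by blast
  then have "mset cs2 = mset (cs1 @ ds)"
    using assms(3) by simp
  then have "mset (concat cs2) = mset (concat (cs1 @ ds))"
    by (rule mset_concat_cong)
  then have "mset ts2 = mset (ts1 @ concat ds)"
    using assms(1,2) by simp
  moreover have "set ds \<subseteq> set cs2"
    using ds by (metis in_diffD set_mset_mset subsetI)
  ultimately show ?thesis by (rule that)
qed

lemma accepting_runs_differing_by_cycles:
  fixes h :: "nat \<Rightarrow> nat"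
  assumes wf: "wf_gaut G A" and acc: "\<And>i. replicate (h i) a \<in> gaut_lang G A"
  obtains i j qf ts1 ts2 cs where "i < j" "qf \<in> accs A" "walk (trans A) (init A) ts1 qf"
    "walk_word ts1 = replicate (h i) a" "walk_prod G ts1 = \<one>\<^bsub>G\<^esub>"
    "walk_word ts2 = replicate (h j) a" "walk_prod G ts2 = \<one>\<^bsub>G\<^esub>"
    "mset ts2 = mset (ts1 @ concat cs)" "\<forall>c\<in>set cs. (\<exists>p. walk (trans A) p c p) \<and> set c \<subseteq> set ts1"
proof -
  define s where "s = card (states A)"
  obtain QF TS SG CS where run: "\<And>i. QF i \<in> accs A" "\<And>i. walk (trans A) (init A) (TS i) (QF i)"
    "\<And>i. walk_word (TS i) = replicate (h i) a" "\<And>i. walk_prod G (TS i) = \<one>\<^bsub>G\<^esub>"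
    "\<And>i. walk (trans A) (init A) (SG i) (QF i)" "\<And>i. length (SG i) \<le> s"
    "\<And>i. \<forall>c\<in>set (CS i). length c \<le> s \<and> (\<exists>p. walk (trans A) p c p)"
    "\<And>i. mset (TS i) = mset (SG i @ concat (CS i))"
    using accepted_words_decomposed_walks[where ws = "\<lambda>i. replicate (h i) a", OF wf acc]
    unfolding s_def by blast
  define Lists where "Lists = {c. set c \<subseteq> trans A \<and> length c \<le> s}"
  have "finite (states A)" "finite (trans A)" "accs A \<subseteq> states A"
    using wf by (auto simp: wf_gaut_def)
  then have "finite Lists" "finite (states A \<times> Lists)"
    using finite_lists_length_le unfolding Lists_def by auto
  have cycles_in: "set_mset (mset (CS i)) \<subseteq> Lists" and "(QF i, SG i) \<in> states A \<times> Lists" for i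
    using run(1,5,6,7)[of i] walk_subset \<open>accs A \<subseteq> states A\<close> unfolding Lists_def by fastforce+
  then have "finite (range (\<lambda>i. (QF i, SG i)))"
    using \<open>finite (states A \<times> Lists)\<close> by (meson finite_subset image_subset_iff)
  then obtain i j where "i < j" "(QF i, SG i) = (QF j, SG j)"
    "set_mset (mset (CS i)) = set_mset (mset (CS j))" "mset (CS i) \<subseteq># mset (CS j)"
    using multiset_seq_subset_pair[where M = "\<lambda>i. mset (CS i)" and g = "\<lambda>i. (QF i, SG i)"]
      \<open>finite Lists\<close> cycles_in by blast
  then have ij: "i < j" "QF i = QF j" "SG i = SG j" "set (CS j) = set (CS i)"
    "mset (CS i) \<subseteq># mset (CS j)"
    by simp_all
  obtain ds where ds: "mset (TS j) = mset (TS i @ concat ds)" "set ds \<subseteq> set (CS j)"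
    using mset_concat_diff[OF run(8)[of i] run(8)[of j, folded ij(3)] ij(5)] by blast
  have cycles: "\<forall>c\<in>set ds. (\<exists>p. walk (trans A) p c p) \<and> set c \<subseteq> set (TS i)"
  proof
    fix c assume "c \<in> set ds"
    then have "c \<in> set (CS i)"
      using ds(2) ij(4) by blast
    moreover have "set (concat (CS i)) \<subseteq> set (TS i)"
      using mset_eq_setD[OF run(8)[of i]] by simp
    ultimately show "(\<exists>p. walk (trans A) p c p) \<and> set c \<subseteq> set (TS i)"
      using run(7)[of i] by auto
  qed
  show ?thesis
    by (rule that[of i j "QF i" "TS i" "TS j" ds]) (use ij(1) run(1-4)[of i] run(3,4)[of j] ds(1) cycles in auto)
qed

lemma walk_extension_prod_word:
  assumes G: "comm_monoid G" and carrier: "tr_elem ` set (ts @ e) \<subseteq> carrier G"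
    and ts: "walk_prod G ts = \<one>\<^bsub>G\<^esub>" "walk_word ts = replicate n a"
    and ts2: "walk_prod G ts2 = \<one>\<^bsub>G\<^esub>" "walk_word ts2 = replicate n2 a"
    and mset: "mset ts2 = mset (ts @ e)"
  shows "walk_prod G e = \<one>\<^bsub>G\<^esub>" "walk_word e = replicate (n2 - n) a"
proof -
  have "walk_prod G (ts @ e) = \<one>\<^bsub>G\<^esub>"
    using walk_prod_mset_cong[OF G _ mset] carrier ts2(1) mset by (metis mset_eq_setD)
  moreover have "walk_prod G (ts @ e) = walk_prod G ts \<otimes>\<^bsub>G\<^esub> walk_prod G e"
    by (rule walk_prod_append) (use comm_monoid.axioms(1)[OF G] carrier in auto)
  moreover have "walk_prod G e \<in> carrier G"
    by (rule walk_prod_closed) (use comm_monoid.axioms(1)[OF G] carrier in auto)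
  ultimately show "walk_prod G e = \<one>\<^bsub>G\<^esub>"
    using comm_monoid.axioms(1)[OF G] ts(1) by (simp add: monoid.l_one)
  have "replicate_mset n a + mset (walk_word e) = replicate_mset n2 a"
    using mset_walk_word_cong[OF mset] ts(2) ts2(2) by simp
  then have "n \<le> n2" "mset (walk_word e) = replicate_mset (n2 - n) a"
    by (metis add_diff_cancel_left' size_replicate_mset size_union le_add1 replicate_mset_add le_add_diff_inverse)+
  then show "walk_word e = replicate (n2 - n) a"
    by (simp add: mset_eq_replicate_msetD)
qed

lemma accepting_walk_pumping:
  assumes G: "comm_monoid G" and wf: "wf_gaut G A" and qf: "qf \<in> accs A"
    and ts: "walk (trans A) (init A) ts qf" "walk_prod G ts = \<one>\<^bsub>G\<^esub>" "walk_word ts = replicate n a"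
    and cs: "\<forall>c\<in>set cs. (\<exists>p. walk (trans A) p c p) \<and> set c \<subseteq> set ts"
    and e: "walk_prod G (concat cs) = \<one>\<^bsub>G\<^esub>" "walk_word (concat cs) = replicate d a"
  shows "replicate (n + k * d) a \<in> gaut_lang G A"
proof -
  let ?e = "concat cs"
  have "\<forall>c\<in>set (concat (replicate k cs)). (\<exists>p. walk (trans A) p c p) \<and> set c \<subseteq> set ts"
    using cs by auto
  then obtain ts' where ts': "walk (trans A) (init A) ts' qf"
    "mset ts' = mset (ts @ concat (concat (replicate k cs)))"
    using walk_insert_cycles[OF ts(1)] by metis
  have "concat (concat (replicate k cs)) = concat (replicate k ?e)"
    by (induction k) simp_all
  then have mset_ts': "mset ts' = mset (ts @ concat (replicate k ?e))"
    using ts'(2) by simp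
  have carrier: "tr_elem ` set ts \<subseteq> carrier G" "tr_elem ` set ts' \<subseteq> carrier G"
    using walk_subset[OF ts(1)] walk_subset[OF ts'(1)] wf_gaut_trans(2)[OF wf] by auto
  moreover have "set ?e \<subseteq> set ts" "set (concat (replicate k ?e)) \<subseteq> set ?e"
    using cs by auto
  ultimately have carrier_e: "tr_elem ` set ?e \<subseteq> carrier G"
    "tr_elem ` set (concat (replicate k ?e)) \<subseteq> carrier G"
    by blast+
  have "walk_prod G ts' = walk_prod G (ts @ concat (replicate k ?e))"
    by (rule walk_prod_mset_cong[OF G carrier(2) mset_ts'])
  also have "\<dots> = \<one>\<^bsub>G\<^esub>"
    using comm_monoid.axioms(1)[OF G] carrier(1) carrier_e ts(2) e(1)
    by (simp add: walk_prod_append walk_prod_concat_replicate monoid.l_one)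
  finally have prod: "walk_prod G ts' = \<one>\<^bsub>G\<^esub>" .
  have "mset (walk_word ts') = mset (walk_word (ts @ concat (replicate k ?e)))"
    by (rule mset_walk_word_cong[OF mset_ts'])
  also have "\<dots> = mset (replicate (n + k * d) a)"
    by (simp only: walk_word_append ts(3) walk_word_concat_replicate[OF e(2)] replicate_add)
  finally have "walk_word ts' = replicate (n + k * d) a"
    by (intro mset_eq_replicate_msetD) (simp only: mset_replicate)
  then show ?thesis
    using gaut_lang_iff_walk qf ts'(1) prod by blast
qed

lemma comm_monoid_unary_pumping:
  fixes h :: "nat \<Rightarrow> nat"
  assumes G: "comm_monoid G" and wf: "wf_gaut G A"
    and acc: "\<And>i. replicate (h i) a \<in> gaut_lang G A" and h: "strict_mono h"
  obtains m d where "d > 0" "\<And>k. replicate (m + k * d) a \<in> gaut_lang G A"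
proof -
  obtain i j qf ts1 ts2 cs where ij: "i < j" and qf: "qf \<in> accs A"
    and ts1: "walk (trans A) (init A) ts1 qf" "walk_word ts1 = replicate (h i) a"
      "walk_prod G ts1 = \<one>\<^bsub>G\<^esub>"
    and ts2: "walk_word ts2 = replicate (h j) a" "walk_prod G ts2 = \<one>\<^bsub>G\<^esub>"
    and mset: "mset ts2 = mset (ts1 @ concat cs)"
    and cycles: "\<forall>c\<in>set cs. (\<exists>p. walk (trans A) p c p) \<and> set c \<subseteq> set ts1"
    by (rule accepting_runs_differing_by_cycles[OF wf acc])
  have "tr_elem ` set (ts1 @ concat cs) \<subseteq> carrier G"
    using cycles walk_subset[OF ts1(1)] wf_gaut_trans(2)[OF wf] by fastforce
  then have "walk_prod G (concat cs) = \<one>\<^bsub>G\<^esub>" "walk_word (concat cs) = replicate (h j - h i) a"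
    using walk_extension_prod_word[OF G _ ts1(3,2) ts2(2,1) mset] by auto
  then have "replicate (h i + k * (h j - h i)) a \<in> gaut_lang G A" for k
    using accepting_walk_pumping[OF G wf qf ts1(1,3,2) cycles] by blast
  moreover have "h j - h i > 0"
    using h ij by (simp add: strict_mono_def)
  ultimately show ?thesis by (rule that[rotated])
qed

definition triangular_words :: "nat list set" where
  "triangular_words = {replicate (n * (n + 1) div 2) 0 | n. True}"

lemma triangular_no_arith_progression:
  fixes m d :: nat
  assumes "d > 0"
  obtains k where "\<forall>n. m + k * d \<noteq> n * (n + 1) div 2"
proof -
  have double: "2 * (n * (n + 1) div 2) = n * (n + 1)" for n :: nat
    by simp
  show ?thesis
  proof (rule ccontr)
    assume "\<not> thesis"
    then have "\<exists>n. m + k * d = n * (n + 1) div 2" for k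
      using that by blast
    then obtain n1 n2 where n1: "2 * (m + (2 * d) * d) = n1 * (n1 + 1)"
      and n2: "2 * (m + (2 * d + 1) * d) = n2 * (n2 + 1)"
      using double by metis
    have "d < n1"
    proof (rule ccontr)
      assume "\<not> d < n1"
      then have "n1 * (n1 + 1) \<le> d * (d + 1)" by (intro mult_le_mono) auto
      moreover have "d * (d + 1) < 4 * (d * d)" using assms by simp
      moreover have "4 * (d * d) \<le> n1 * (n1 + 1)" using n1 by simp
      ultimately show False by linarith
    qed
    have gap: "n2 * (n2 + 1) = n1 * (n1 + 1) + 2 * d"
      using n1 n2 by (simp add: algebra_simps)
    have "n1 < n2"
    proof (rule ccontr)
      assume "\<not> n1 < n2"
      then have "n2 * (n2 + 1) \<le> n1 * (n1 + 1)" by (intro mult_le_mono) auto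
      then show False using gap assms by simp
    qed
    then have "(n1 + 1) * (n1 + 2) \<le> n2 * (n2 + 1)" by (intro mult_le_mono) auto
    then show False using gap \<open>d < n1\<close> by (simp add: algebra_simps)
  qed
qed

lemma triangular_words_notin_LClass:
  assumes "comm_monoid G"
  shows "triangular_words \<notin> LClass G"
proof
  assume "triangular_words \<in> LClass G"
  then obtain A where wf: "wf_gaut G A" and lang: "gaut_lang G A = triangular_words"
    unfolding LClass_def by blast
  define h :: "nat \<Rightarrow> nat" where "h n = n * (n + 1) div 2" for n
  have "h (Suc n) = h n + Suc n" for n
  proof -
    have "Suc n * (Suc n + 1) = n * (n + 1) + Suc n * 2" by simp
    then show ?thesis unfolding h_def by simp
  qed
  then have mono: "strict_mono h"
    unfolding strict_mono_Suc_iff by simp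
  have acc: "replicate (h n) 0 \<in> gaut_lang G A" for n
    unfolding lang triangular_words_def h_def by blast
  obtain m d where "d > 0" and pumped: "\<And>k. replicate (m + k * d) 0 \<in> gaut_lang G A"
    using comm_monoid_unary_pumping[OF assms wf acc mono] by blast
  then obtain k where k: "\<forall>n. m + k * d \<noteq> n * (n + 1) div 2"
    using triangular_no_arith_progression by blast
  obtain n where "replicate (m + k * d) 0 = replicate (n * (n + 1) div 2) (0::nat)"
    using pumped[of k] unfolding lang triangular_words_def by blast
  then show False
    using k by (metis length_replicate)
qed

section \<open>Injective homomorphisms\<close>

definition map_gaut :: "('g \<Rightarrow> 'h) \<Rightarrow> 'g gaut \<Rightarrow> 'h gaut" where
  "map_gaut f A = \<lparr>states = states A, alph = alph A, init = init A, accs = accs A,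
     trans = (\<lambda>(q, l, q', m). (q, l, q', f m)) ` trans A\<rparr>"

lemma map_gaut_simps [simp]:
  "states (map_gaut f A) = states A" "alph (map_gaut f A) = alph A" "init (map_gaut f A) = init A"
  "accs (map_gaut f A) = accs A"
  "(q, l, q', y) \<in> trans (map_gaut f A) \<longleftrightarrow> (\<exists>m. (q, l, q', m) \<in> trans A \<and> y = f m)"
  unfolding map_gaut_def by (auto simp: image_iff) force

lemma wf_map_gaut:
  "wf_gaut G A \<Longrightarrow> f \<in> carrier G \<rightarrow> carrier H \<Longrightarrow> wf_gaut H (map_gaut f A)"
  unfolding wf_gaut_def by (auto simp: map_gaut_def)

lemma reach_closed:
  assumes "monoid G" "wf_gaut G A" "reach G A q w x"
  shows "x \<in> carrier G"
  using assms(3) by induction (use assms(1,2) in \<open>auto simp: wf_gaut_def monoid.m_closed\<close>)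

lemma reach_map_gaut:
  assumes G: "monoid G" and wf: "wf_gaut G A" and f: "f \<in> hom G H" "f \<one>\<^bsub>G\<^esub> = \<one>\<^bsub>H\<^esub>"
  shows "reach H (map_gaut f A) q w y \<longleftrightarrow> (\<exists>x. reach G A q w x \<and> y = f x)"
proof
  have hom: "f (x \<otimes>\<^bsub>G\<^esub> m) = f x \<otimes>\<^bsub>H\<^esub> f m" if "reach G A p v x" "(p, l, p', m) \<in> trans A"
    for p v x l p' m
    using that reach_closed[OF G wf] wf f(1) by (auto simp: wf_gaut_def hom_mult)
  show "reach H (map_gaut f A) q w y \<Longrightarrow> \<exists>x. reach G A q w x \<and> y = f x"
  proof (induction rule: reach.induct)
    case start
    show ?case using reach.start f(2) by (intro exI[of _ "\<one>\<^bsub>G\<^esub>"]) simp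
  next
    case (eps q w y q' m)
    then obtain x m0 where "reach G A q w x" "y = f x" "(q, None, q', m0) \<in> trans A" "m = f m0"
      by auto
    then show ?case using reach.eps hom by metis
  next
    case (read q w y s q' m)
    then obtain x m0 where "reach G A q w x" "y = f x" "(q, Some s, q', m0) \<in> trans A" "m = f m0"
      by auto
    then show ?case using reach.read hom by metis
  qed
  show "\<exists>x. reach G A q w x \<and> y = f x \<Longrightarrow> reach H (map_gaut f A) q w y"
  proof (elim exE conjE)
    fix x assume "reach G A q w x" "y = f x"
    then show "reach H (map_gaut f A) q w y"
    proof (induction arbitrary: y rule: reach.induct)
      case start
      then show ?case using reach.start[of H "map_gaut f A"] f(2) by simp
    next
      case (eps q w x q' m)
      have "(q, None, q', f m) \<in> trans (map_gaut f A)"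
        using eps.hyps(2) by auto
      then show ?case using reach.eps[OF eps.IH[OF refl]] hom eps by simp
    next
      case (read q w x s q' m)
      have "(q, Some s, q', f m) \<in> trans (map_gaut f A)"
        using read.hyps(2) by auto
      then show ?case using reach.read[OF read.IH[OF refl]] hom read by simp
    qed
  qed
qed

lemma LClass_subset_if_inj_hom:
  assumes G: "monoid G" and f: "f \<in> hom G H" "f \<one>\<^bsub>G\<^esub> = \<one>\<^bsub>H\<^esub>" "inj_on f (carrier G)"
  shows "LClass G \<subseteq> LClass H"
proof
  fix L assume "L \<in> LClass G"
  then obtain A where wf: "wf_gaut G A" and L: "L = gaut_lang G A"
    unfolding LClass_def by blast
  have "f x = \<one>\<^bsub>H\<^esub> \<longleftrightarrow> x = \<one>\<^bsub>G\<^esub>" if "reach G A q w x" for q w x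
    using f reach_closed[OF G wf that] monoid.one_closed[OF G] by (metis inj_onD)
  then have "(\<exists>x. reach G A q w x \<and> \<one>\<^bsub>H\<^esub> = f x) \<longleftrightarrow> reach G A q w \<one>\<^bsub>G\<^esub>" for q w
    by (metis f(2))
  then have "gaut_lang H (map_gaut f A) = L"
    unfolding L gaut_lang_def reach_map_gaut[OF G wf f(1,2)] by simp
  moreover have "wf_gaut H (map_gaut f A)"
    using wf f(1) by (simp add: wf_map_gaut hom_def)
  ultimately show "L \<in> LClass H"
    unfolding LClass_def by blast
qed

section \<open>\<open>\<int>\<^sup>2\<close> and the Heisenberg group\<close>

lemma comm_monoid_Z2: "comm_monoid Z2"
  unfolding Z2_def by (intro comm_monoidI) (auto simp: DirProd_def)

lemma Heis_mult [simp]: "(a, b, c) \<otimes>\<^bsub>Heis\<^esub> (a', b', c') = (a + a', b + b', c + c' + a * b')"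
  by (simp add: Heis_def)

lemma Heis_one [simp]: "\<one>\<^bsub>Heis\<^esub> = (0, 0, 0)" and carrier_Heis [simp]: "carrier Heis = UNIV"
  by (simp_all add: Heis_def)

lemma LClass_Z2_subset_Heis: "LClass Z2 \<subseteq> LClass Heis"
proof (rule LClass_subset_if_inj_hom)
  show "monoid Z2"
    using comm_monoid_Z2 by (rule comm_monoid.axioms(1))
  show "(\<lambda>(x, y). (0, x, y)) \<in> hom Z2 Heis"
    by (auto simp: hom_def Z2_def)
qed (auto simp: Z2_def inj_on_def)

lemma reach_eps_iterate:
  "reach G A q w x \<Longrightarrow> (q, None, q, m) \<in> trans A \<Longrightarrow> reach G A q w (((\<lambda>y. y \<otimes>\<^bsub>G\<^esub> m) ^^ k) x)"
  by (induction k) (auto intro: reach.eps)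

lemma reach_read_iterate:
  "reach G A q w x \<Longrightarrow> (q, Some s, q, m) \<in> trans A \<Longrightarrow>
     reach G A q (w @ replicate k s) (((\<lambda>y. y \<otimes>\<^bsub>G\<^esub> m) ^^ k) x)"
proof (induction k)
  case (Suc k)
  have "reach G A q ((w @ replicate k s) @ [s]) (((\<lambda>y. y \<otimes>\<^bsub>G\<^esub> m) ^^ k) x \<otimes>\<^bsub>G\<^esub> m)"
    using reach.read[OF Suc.IH[OF Suc.prems] Suc.prems(2)] .
  then show ?case by (simp add: replicate_append_same)
qed simp

lemma Heis_iterate_mult:
  "((\<lambda>y. y \<otimes>\<^bsub>Heis\<^esub> (a', b', c')) ^^ k) (a, b, c) =
     (a + int k * a', b + int k * b', c + int k * c' + int k * a * b' + int (\<Sum>i<k. i) * a' * b')"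
  by (induction k) (simp_all add: algebra_simps)

definition heis_triangular_aut :: "(int \<times> int \<times> int) gaut" where
  "heis_triangular_aut = \<lparr>states = {0, 1, 2, 3}, alph = {0}, init = 0, accs = {3},
     trans = {(0, None, 0, (1, 1, 0)), (0, None, 1, (0, 0, 0)), (1, Some 0, 1, (0, 0, -1)),
              (1, None, 2, (0, 0, 0)), (2, None, 2, (-1, 0, 0)), (2, None, 3, (0, 0, 0)),
              (3, None, 3, (0, -1, 0))}\<rparr>"

lemma heis_triangular_aut_simps:
  "init heis_triangular_aut = 0" "accs heis_triangular_aut = {3}"
  "trans heis_triangular_aut =
     {(0, None, 0, (1, 1, 0)), (0, None, 1, (0, 0, 0)), (1, Some 0, 1, (0, 0, -1)),
      (1, None, 2, (0, 0, 0)), (2, None, 2, (-1, 0, 0)), (2, None, 3, (0, 0, 0)),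
      (3, None, 3, (0, -1, 0))}"
  by (simp_all add: heis_triangular_aut_def)

lemma wf_heis_triangular_aut: "wf_gaut Heis heis_triangular_aut"
  by (simp add: wf_gaut_def heis_triangular_aut_def)

text \<open>In state 3 only the second entry decreases, so a nonzero first entry can no longer be
  cancelled.\<close>
fun triangular_aut_inv :: "nat \<Rightarrow> nat list \<Rightarrow> int \<times> int \<times> int \<Rightarrow> bool" where
  "triangular_aut_inv q w (a, b, c) \<longleftrightarrow> set w \<subseteq> {0} \<and>
     (q \<le> 2 \<longrightarrow> 0 \<le> b \<and> 2 * (c + int (length w)) = b * (b - 1)) \<and> (q = 0 \<longrightarrow> a = b) \<and>
     (q = 3 \<longrightarrow> a \<noteq> 0 \<or> (\<exists>n\<ge>0. 2 * (c + int (length w)) = n * (n - 1)))"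

lemma reach_heis_triangular_aut_inv:
  "reach Heis heis_triangular_aut q w x \<Longrightarrow> triangular_aut_inv q w x"
proof (induction rule: reach.induct)
  case start
  then show ?case by (simp add: heis_triangular_aut_def)
next
  case (eps q w x q' m)
  then show ?case
    by (cases x) (auto simp: heis_triangular_aut_def algebra_simps)
next
  case (read q w x s q' m)
  then show ?case
    by (cases x) (auto simp: heis_triangular_aut_def algebra_simps)
qed

lemma heis_triangular_aut_sound: "gaut_lang Heis heis_triangular_aut \<subseteq> triangular_words"
proof
  fix w assume "w \<in> gaut_lang Heis heis_triangular_aut"
  then have "reach Heis heis_triangular_aut 3 w (0, 0, 0)"
    by (simp add: gaut_lang_def heis_triangular_aut_simps)
  then have "triangular_aut_inv 3 w (0, 0, 0)"
    by (rule reach_heis_triangular_aut_inv)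
  then obtain n :: int where n: "0 \<le> n" "2 * int (length w) = n * (n - 1)" and "set w \<subseteq> {0}"
    by auto
  then have w: "w = replicate (length w) 0"
    by (metis replicate_length_same singletonD subset_iff)
  obtain k where k: "n = int k"
    using n(1) nonneg_eq_int by blast
  show "w \<in> triangular_words"
  proof (cases k)
    case 0
    then show ?thesis
      using n(2) k w unfolding triangular_words_def by (intro CollectI exI[of _ 0]) simp
  next
    case (Suc m)
    then have "2 * length w = m * (m + 1)"
      using n(2) k by (simp add: algebra_simps flip: of_nat_mult of_nat_add of_nat_eq_iff)
    then have "w = replicate (m * (m + 1) div 2) 0"
      using w by (metis nonzero_mult_div_cancel_left zero_neq_numeral)
    then show ?thesis
      unfolding triangular_words_def by blast
  qed
qed

lemma heis_triangular_aut_complete: "triangular_words \<subseteq> gaut_lang Heis heis_triangular_aut"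
proof
  fix w assume "w \<in> triangular_words"
  then obtain n where w: "w = replicate (n * (n + 1) div 2) 0"
    unfolding triangular_words_def by blast
  let ?N = "Suc n" and ?T = "n * (n + 1) div 2"
  have sum: "(\<Sum>i<?N. i) = ?T"
    using gauss_sum_nat[of n] by (simp add: lessThan_Suc_atMost atLeast0AtMost)
  let ?B = heis_triangular_aut
  have r0: "reach Heis ?B 0 [] (0, 0, 0)"
    using reach.start[of Heis ?B] by (simp add: heis_triangular_aut_simps)
  have "reach Heis ?B 0 [] (int ?N, int ?N, int (\<Sum>i<?N. i))"
    using reach_eps_iterate[OF r0, of "(1, 1, 0)" ?N]
    by (simp add: heis_triangular_aut_simps Heis_iterate_mult add.commute)
  then have r1: "reach Heis ?B 0 [] (int ?N, int ?N, int ?T)"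
    unfolding sum .
  have r2: "reach Heis ?B 1 [] (int ?N, int ?N, int ?T)"
    using reach.eps[OF r1, of 1 "(0, 0, 0)"] by (simp add: heis_triangular_aut_simps)
  have r3: "reach Heis ?B 1 w (int ?N, int ?N, 0)"
    using reach_read_iterate[OF r2, of 0 "(0, 0, -1)" ?T] w
    by (simp add: heis_triangular_aut_simps Heis_iterate_mult)
  have r4: "reach Heis ?B 2 w (int ?N, int ?N, 0)"
    using reach.eps[OF r3, of 2 "(0, 0, 0)"] by (simp add: heis_triangular_aut_simps)
  have r5: "reach Heis ?B 2 w (0, int ?N, 0)"
    using reach_eps_iterate[OF r4, of "(-1, 0, 0)" ?N]
    by (simp add: heis_triangular_aut_simps Heis_iterate_mult)
  have r6: "reach Heis ?B 3 w (0, int ?N, 0)"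
    using reach.eps[OF r5, of 3 "(0, 0, 0)"] by (simp add: heis_triangular_aut_simps)
  have "reach Heis ?B 3 w (0, 0, 0)"
    using reach_eps_iterate[OF r6, of "(0, -1, 0)" ?N]
    by (simp add: heis_triangular_aut_simps Heis_iterate_mult)
  then show "w \<in> gaut_lang Heis ?B"
    by (simp add: gaut_lang_def heis_triangular_aut_simps)
qed

lemma gaut_lang_heis_triangular_aut: "gaut_lang Heis heis_triangular_aut = triangular_words"
  using heis_triangular_aut_sound heis_triangular_aut_complete by (rule antisym)

theorem theorem3p10:
  shows "LClass Z2 \<subset> LClass Heis"
proof -
  have "triangular_words \<in> LClass Heis"
    using wf_heis_triangular_aut gaut_lang_heis_triangular_aut unfolding LClass_def by blast
  moreover have "triangular_words \<notin> LClass Z2"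
    by (rule triangular_words_notin_LClass[OF comm_monoid_Z2])
  ultimately show ?thesis
    using LClass_Z2_subset_Heis by blast
qed

end
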